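(* Consider Algorithm iR2N (described in the context) and suppose (A1)–(A7) hold. Let $N\subseteq\mathbb{N}$ be an infinite index set and, for $k\in N$, let $s_{k,\mathrm{cp}}\in\operatorname{argmin}_s m_{\mathrm{cp}}(s;x_k,\nu_k^{-1})$ and $u_k\in\nabla f(x_k)+\partial\psi(s_{k,\mathrm{cp}};x_k)$ be such that $\{s_{k,\mathrm{cp}}\}_{k\in N}\to0$ and $\{u_k\}_{k\in N}\to0$ (such $N$, $s_{k,\mathrm{cp}}$, $u_k$ exist under these assumptions). Assume that $\{x_k\}_{k\in N}\to\bar x$ and that $$\limsup_{k\in N}\partial\psi(s_{k,\mathrm{cp}};x_k)\subseteq\partial\psi(0;\bar x).$$ Then $0\in\nabla f(\bar x)+\partial h(\bar x)$, i.e., $\bar x$ is stationary for $\min_x f(x)+h(x)$.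
   Context: Setting. $f:\mathbb{R}^n\to\mathbb{R}$ is continuously differentiable, $h:\mathbb{R}^n\to\mathbb{R}\cup\{+\infty\}$ is proper and lower semicontinuous; the problem is $\min_x f(x)+h(x)$. $\|\cdot\|$ is the Euclidean norm (spectral norm for matrices). For each $x$, approximations $\hat f(x)\in\mathbb{R}$ of $f(x)$ and $\hat\nabla f(x)\in\mathbb{R}^n$ of $\nabla f(x)$ are available. For each $x$, $\psi(\cdot;x):\mathbb{R}^n\to\mathbb{R}\cup\{+\infty\}$ is proper, lsc, satisfies $\psi(0;x)=h(x)$ and $\partial\psi(0;x)\subseteq\partial h(x)$ ($\partial$ = limiting subdifferential), and is uniformly prox-bounded: there is $\lambda>0$ such that for every $x$ and every $0<\lambda'<\lambda$, $w\mapsto\psi(w;x)+\tfrac{1}{2\lambda'}\|w\|^2$ is bounded below. For sets $\mathcal{A}_k\subseteq\mathbb{R}^n$, $\limsup_{k\in N}\mathcal{A}_k$ is the set of limits of all convergent sequences $\{a_k\}_{k\in N'}$ with $N'\subseteq N$ infinite and $a_k\in\mathcal{A}_k$. Models: $\varphi_{\mathrm{cp}}(s;x)=\hat f(x)+\hat\nabla f(x)^Ts$; $m_{\mathrm{cp}}(s;x,\nu^{-1})=\varphi_{\mathrm{cp}}(s;x)+\tfrac12\nu^{-1}\|s\|^2+\psi(s;x)$; for a symmetric $B(x)\in\mathbb{R}^{n\times n}$, $\varphi(s;x)=\hat f(x)+\hat\nabla f(x)^Ts+\tfrac12 s^TB(x)s$ and $m(s;x,\sigma)=\varphi(s;x)+\tfrac12\sigma\|s\|^2+\psi(s;x)$.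 Algorithm iR2N. Constants: $\kappa_f,\kappa_\nabla>0$, $0<\gamma_3\le 1<\gamma_1\le\gamma_2$, $0<\hat\eta_1\le\hat\eta_2<1$, $0<\theta_1<1<\theta_2$, $\sigma_{\min}>4\kappa_f\theta_1\theta_2^2/(\hat\eta_1(1-\theta_1))$, $\sigma_0\ge\sigma_{\min}$, $x_0\in\mathbb{R}^n$. At iteration $k=0,1,\dots$: choose symmetric $B_k=B(x_k)$; set $\nu_k=\theta_1/(\|B_k\|+\sigma_k)$; compute $\hat s_{k,\mathrm{cp}}$ with $m_{\mathrm{cp}}(\hat s_{k,\mathrm{cp}};x_k,\nu_k^{-1})\le m_{\mathrm{cp}}(0;x_k,\nu_k^{-1})$ and set $\hat\xi_{k,\mathrm{cp}}=(\varphi_{\mathrm{cp}}+\psi)(0;x_k)-(\varphi_{\mathrm{cp}}+\psi)(\hat s_{k,\mathrm{cp}};x_k)$; compute $s_k$ with $m(s_k;x_k,\sigma_k)\le m(\hat s_{k,\mathrm{cp}};x_k,\sigma_k)$; if $\|s_k\|>\theta_2\|\hat s_{k,\mathrm{cp}}\|$, reset $s_k=\hat s_{k,\mathrm{cp}}$ (repeated with refined $\hat f,\hat\nabla f$ until (A6) holds). Compute $\hat\rho_k=\dfrac{\hat f(x_k)+h(x_k)-\hat f(x_k+s_k)-h(x_k+s_k)}{\varphi(0;x_k)+\psi(0;x_k)-\varphi(s_k;x_k)-\psi(s_k;x_k)}$ with $\varphi(\cdot;x_k)$ using $B_k$. If $\hat\rho_k\ge\hat\eta_1$ set $x_{k+1}=x_k+s_k$,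 else $x_{k+1}=x_k$. Choose $\sigma_{k+1}\in[\gamma_3\sigma_k,\sigma_k]$ if $\hat\rho_k\ge\hat\eta_2$, $\sigma_{k+1}\in[\sigma_k,\gamma_1\sigma_k]$ if $\hat\eta_1\le\hat\rho_k<\hat\eta_2$, $\sigma_{k+1}\in[\gamma_1\sigma_k,\gamma_2\sigma_k]$ if $\hat\rho_k<\hat\eta_1$; then reset $\sigma_{k+1}=\max(\sigma_{k+1},\sigma_{\min})$. Assumptions. (A1) $|f(x+s)-f(x)-\nabla f(x)^Ts|\le\tfrac12L\|s\|^2$ for all $x,s$, for some $L\ge0$. (A2) $\|B_k\|\le\kappa_B$ for all $k$. (A3) $|\psi(s;x)-h(x+s)|\le\kappa_h\|s\|^2$ for all $x,s$. (A4) For all $k$, $\varphi(0;x_k)+\psi(0;x_k)-(\varphi(s_k;x_k)+\psi(s_k;x_k))\ge(1-\theta_1)\hat\xi_{k,\mathrm{cp}}$. (A5) There is $\kappa_s\in(0,1]$ such that for all $k$, $\operatorname{argmin}_s m_{\mathrm{cp}}(s;x_k,\nu_k^{-1})\neq\emptyset$ and $\|\hat s_{k,\mathrm{cp}}\|\ge\kappa_s\min\{\|s\|\mid s\in\operatorname{argmin}_{s'} m_{\mathrm{cp}}(s';x_k,\nu_k^{-1})\}$. (A6) For all $k$: $|f(x_k)-\hat f(x_k)|\le\kappa_f\|s_k\|^2$, $|f(x_k+s_k)-\hat f(x_k+s_k)|\le\kappa_f\|s_k\|^2$, $\|\nabla f(x_k)-\hat\nabla f(x_k)\|\le\kappa_\nabla\|s_k\|$.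 (A7) $f+h$ is bounded below on $\mathbb{R}^n$. *)

theory Defs
  imports "HOL-Analysis.Analysis"
begin

definition proper_fun :: "('a \<Rightarrow> ereal) \<Rightarrow> bool" where
  "proper_fun \<phi> \<longleftrightarrow> (\<exists>x. \<phi> x < \<infinity>) \<and> (\<forall>x. \<phi> x > -\<infinity>)"

definition lsc_fun :: "('a::topological_space \<Rightarrow> ereal) \<Rightarrow> bool" where
  "lsc_fun \<phi> \<longleftrightarrow> (\<forall>x X. X \<longlonglongrightarrow> x \<longrightarrow> \<phi> x \<le> liminf (\<lambda>k. \<phi> (X k)))"

text \<open>Frechet (regular) subdifferential:
  v is a regular subgradient at x iff phi x is finite and
  liminf_{y -> x, y ~= x} (phi y - phi x - v.(y-x)) / |y-x| >= 0,
  written out in epsilon-delta form.\<close>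
definition frechet_subdiff :: "('a::real_inner \<Rightarrow> ereal) \<Rightarrow> 'a \<Rightarrow> 'a set" where
  "frechet_subdiff \<phi> x = {v. \<bar>\<phi> x\<bar> \<noteq> \<infinity> \<and>
     (\<forall>\<epsilon>>0. \<exists>\<delta>>0. \<forall>y. norm (y - x) < \<delta> \<longrightarrow>
        \<phi> y \<ge> ereal (real_of_ereal (\<phi> x) + v \<bullet> (y - x) - \<epsilon> * norm (y - x)))}"

definition limiting_subdiff :: "('a::real_inner \<Rightarrow> ereal) \<Rightarrow> 'a \<Rightarrow> 'a set" where
  "limiting_subdiff \<phi> x = {v. \<exists>X V. X \<longlonglongrightarrow> x \<and> (\<lambda>k. \<phi> (X k)) \<longlonglongrightarrow> \<phi> x \<and>
     (\<forall>k. V k \<in> frechet_subdiff \<phi> (X k)) \<and> V \<longlonglongrightarrow> v}"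

definition conv_along :: "nat set \<Rightarrow> (nat \<Rightarrow> 'a::topological_space) \<Rightarrow> 'a \<Rightarrow> bool" where
  "conv_along N a l \<longleftrightarrow> (a \<longlongrightarrow> l) (inf sequentially (principal N))"

definition set_limsup :: "nat set \<Rightarrow> (nat \<Rightarrow> 'a::topological_space set) \<Rightarrow> 'a set" where
  "set_limsup N A = {v. \<exists>N' a. N' \<subseteq> N \<and> infinite N' \<and> (\<forall>k\<in>N'. a k \<in> A k) \<and> conv_along N' a v}"

definition spec_norm :: "real^'n^'m \<Rightarrow> real" where
  "spec_norm M = onorm (\<lambda>v. M *v v)"

text \<open>Models. fh = f-hat(x), g = gradient-hat(x), ps = psi(.;x).\<close>
definition phi_cp :: "real \<Rightarrow> real^'n \<Rightarrow> real^'n \<Rightarrow> real" where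
  "phi_cp fh g s = fh + g \<bullet> s"

definition m_cp :: "real \<Rightarrow> real^'n \<Rightarrow> (real^'n \<Rightarrow> ereal) \<Rightarrow> real \<Rightarrow> real^'n \<Rightarrow> ereal" where
  "m_cp fh g ps nuinv s = ereal (phi_cp fh g s + 1/2 * nuinv * (norm s)^2) + ps s"

definition phi_q :: "real \<Rightarrow> real^'n \<Rightarrow> real^'n^'n \<Rightarrow> real^'n \<Rightarrow> real" where
  "phi_q fh g B s = fh + g \<bullet> s + 1/2 * (s \<bullet> (B *v s))"

definition m_q :: "real \<Rightarrow> real^'n \<Rightarrow> real^'n^'n \<Rightarrow> (real^'n \<Rightarrow> ereal) \<Rightarrow> real \<Rightarrow> real^'n \<Rightarrow> ereal" where
  "m_q fh g B ps \<sigma> s = ereal (phi_q fh g B s + 1/2 * \<sigma> * (norm s)^2) + ps s"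

end

theory Submission
  imports Defs
begin

text \<open>The residual \<open>u\<^sub>k - \<nabla>f(x\<^sub>k)\<close> is a subgradient of \<open>\<psi>(\<cdot>; x\<^sub>k)\<close> at \<open>s\<^sub>k\<^sub>,\<^sub>c\<^sub>p\<close> and, by
  continuity of \<open>\<nabla>f\<close>, converges along \<open>N\<close> to \<open>-\<nabla>f(xbar)\<close>. So \<open>-\<nabla>f(xbar)\<close> lies in the outer
  limit, hence in \<open>\<partial>\<psi>(0; xbar) \<subseteq> \<partial>h(xbar)\<close>. The assumptions on the iterates of iR2N are
  only needed to guarantee that such \<open>N\<close>, \<open>s\<^sub>k\<^sub>,\<^sub>c\<^sub>p\<close>, \<open>u\<^sub>k\<close> exist; the conclusion does not use them.\<close>

lemma conv_along_isCont:
  assumes "isCont g l" and "conv_along N a l"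
  shows "conv_along N (\<lambda>k. g (a k)) (g l)"
  using assms isCont_tendsto_compose unfolding conv_along_def by blast

lemma conv_along_diff:
  fixes a b :: "nat \<Rightarrow> 'a::topological_group_add"
  assumes "conv_along N a l" and "conv_along N b m"
  shows "conv_along N (\<lambda>k. a k - b k) (l - m)"
  using assms tendsto_diff unfolding conv_along_def by blast

lemma set_limsupI:
  assumes "infinite N" and "\<And>k. k \<in> N \<Longrightarrow> a k \<in> A k" and "conv_along N a v"
  shows "v \<in> set_limsup N A"
  using assms unfolding set_limsup_def by blast

lemma uminus_limit_mem_set_limsup:
  fixes g :: "'a::t2_space \<Rightarrow> 'b::topological_ab_group_add"
  assumes "infinite N" and "isCont g xbar" and "conv_along N x xbar" and "conv_along N u 0"
    and "\<And>k. k \<in> N \<Longrightarrow> u k \<in> (\<lambda>v. g (x k) + v) ` A k"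
  shows "- g xbar \<in> set_limsup N A"
proof (rule set_limsupI)
  show "infinite N" by fact
  show "u k - g (x k) \<in> A k" if "k \<in> N" for k
    using assms(5)[OF that] by (auto simp: algebra_simps)
  have "conv_along N (\<lambda>k. u k - g (x k)) (0 - g xbar)"
    using conv_along_diff[OF assms(4) conv_along_isCont[OF assms(2,3)]] .
  then show "conv_along N (\<lambda>k. u k - g (x k)) (- g xbar)"
    by simp
qed

theorem theorem3p10:
  fixes f :: "real^'n \<Rightarrow> real" and gradf :: "real^'n \<Rightarrow> real^'n"
    and h :: "real^'n \<Rightarrow> ereal"
    and \<psi> :: "real^'n \<Rightarrow> real^'n \<Rightarrow> ereal" \<comment> \<open>\<psi> s x = psi(s; x)\<close>
    and Bf :: "real^'n \<Rightarrow> real^'n^'n"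
    and \<kappa>f \<kappa>g \<gamma>1 \<gamma>2 \<gamma>3 \<eta>1 \<eta>2 \<theta>1 \<theta>2 \<sigma>min :: real
    and x s scp :: "nat \<Rightarrow> real^'n"
    and \<sigma> \<nu> fhx fhxs :: "nat \<Rightarrow> real"  \<comment> \<open>fhx k = f-hat(x_k), fhxs k = f-hat(x_k + s_k)\<close>
    and gh :: "nat \<Rightarrow> real^'n"  \<comment> \<open>gh k = gradient-hat f(x_k)\<close>
    and \<rho> :: "nat \<Rightarrow> ereal"
    and N :: "nat set" and sc u :: "nat \<Rightarrow> real^'n" and xbar :: "real^'n"
  assumes
    \<comment> \<open>problem data\<close>
    f_deriv: "\<And>y. (f has_derivative (\<lambda>d. gradf y \<bullet> d)) (at y)"
    and gradf_cont: "continuous_on UNIV gradf"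
    and h_proper: "proper_fun h" and h_lsc: "lsc_fun h"
    and psi_proper: "\<And>y. proper_fun (\<lambda>w. \<psi> w y)"
    and psi_lsc: "\<And>y. lsc_fun (\<lambda>w. \<psi> w y)"
    and psi_0: "\<And>y. \<psi> 0 y = h y"
    and psi_subdiff: "\<And>y. limiting_subdiff (\<lambda>w. \<psi> w y) 0 \<subseteq> limiting_subdiff h y"
    and psi_prox: "\<exists>lam>0. \<forall>y lam'. 0 < lam' \<and> lam' < lam \<longrightarrow>
        (\<exists>c. \<forall>w. \<psi> w y + ereal (1 / (2 * lam') * (norm w)^2) \<ge> ereal c)"
    and B_sym: "\<And>y. transpose (Bf y) = Bf y"
    \<comment> \<open>constants\<close>
    and const: "\<kappa>f > 0" "\<kappa>g > 0" "0 < \<gamma>3" "\<gamma>3 \<le> 1" "1 < \<gamma>1" "\<gamma>1 \<le> \<gamma>2"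
      "0 < \<eta>1" "\<eta>1 \<le> \<eta>2" "\<eta>2 < 1" "0 < \<theta>1" "\<theta>1 < 1" "1 < \<theta>2"
      "\<sigma>min > 4 * \<kappa>f * \<theta>1 * \<theta>2^2 / (\<eta>1 * (1 - \<theta>1))"
      "\<sigma> 0 \<ge> \<sigma>min"
    \<comment> \<open>Algorithm iR2N, iteration k\<close>
    and nu_def: "\<And>k. \<nu> k = \<theta>1 / (spec_norm (Bf (x k)) + \<sigma> k)"
    and scp_dec: "\<And>k. m_cp (fhx k) (gh k) (\<lambda>w. \<psi> w (x k)) (1 / \<nu> k) (scp k)
                        \<le> m_cp (fhx k) (gh k) (\<lambda>w. \<psi> w (x k)) (1 / \<nu> k) 0"
    and s_step: "\<And>k. s k = scp k \<or>
        (m_q (fhx k) (gh k) (Bf (x k)) (\<lambda>w. \<psi> w (x k)) (\<sigma> k) (s k)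
           \<le> m_q (fhx k) (gh k) (Bf (x k)) (\<lambda>w. \<psi> w (x k)) (\<sigma> k) (scp k)
         \<and> norm (s k) \<le> \<theta>2 * norm (scp k))"
    and rho_def: "\<And>k. \<rho> k =
        (ereal (fhx k) + h (x k) - ereal (fhxs k) - h (x k + s k)) /
        (ereal (phi_q (fhx k) (gh k) (Bf (x k)) 0) + \<psi> 0 (x k)
          - ereal (phi_q (fhx k) (gh k) (Bf (x k)) (s k)) - \<psi> (s k) (x k))"
    and x_upd: "\<And>k. x (Suc k) = (if \<rho> k \<ge> ereal \<eta>1 then x k + s k else x k)"
    and sigma_upd: "\<And>k. \<exists>\<tau>.
        (\<rho> k \<ge> ereal \<eta>2 \<longrightarrow> \<gamma>3 * \<sigma> k \<le> \<tau> \<and> \<tau> \<le> \<sigma> k) \<and>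
        (ereal \<eta>1 \<le> \<rho> k \<and> \<rho> k < ereal \<eta>2 \<longrightarrow> \<sigma> k \<le> \<tau> \<and> \<tau> \<le> \<gamma>1 * \<sigma> k) \<and>
        (\<rho> k < ereal \<eta>1 \<longrightarrow> \<gamma>1 * \<sigma> k \<le> \<tau> \<and> \<tau> \<le> \<gamma>2 * \<sigma> k) \<and>
        \<sigma> (Suc k) = max \<tau> \<sigma>min"
    \<comment> \<open>(A1)\<close>
    and A1: "\<exists>L\<ge>0. \<forall>y d. \<bar>f (y + d) - f y - gradf y \<bullet> d\<bar> \<le> 1/2 * L * (norm d)^2"
    \<comment> \<open>(A2)\<close>
    and A2: "\<exists>\<kappa>B. \<forall>k. spec_norm (Bf (x k)) \<le> \<kappa>B"
    \<comment> \<open>(A3)  |psi(d;y) - h(y+d)| <= kappa_h |d|^2\<close>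
    and A3: "\<exists>\<kappa>h. \<forall>y d. \<psi> d y \<le> h (y + d) + ereal (\<kappa>h * (norm d)^2) \<and>
                         h (y + d) \<le> \<psi> d y + ereal (\<kappa>h * (norm d)^2)"
    \<comment> \<open>(A4)\<close>
    and A4: "\<And>k. ereal (phi_q (fhx k) (gh k) (Bf (x k)) 0) + \<psi> 0 (x k)
                 - (ereal (phi_q (fhx k) (gh k) (Bf (x k)) (s k)) + \<psi> (s k) (x k))
               \<ge> ereal (1 - \<theta>1) *
                 ((ereal (phi_cp (fhx k) (gh k) 0) + \<psi> 0 (x k))
                   - (ereal (phi_cp (fhx k) (gh k) (scp k)) + \<psi> (scp k) (x k)))"
    \<comment> \<open>(A5)\<close>
    and A5: "\<exists>\<kappa>s. 0 < \<kappa>s \<and> \<kappa>s \<le> 1 \<and> (\<forall>k.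
        (let A = {w. \<forall>w'. m_cp (fhx k) (gh k) (\<lambda>v. \<psi> v (x k)) (1 / \<nu> k) w
                           \<le> m_cp (fhx k) (gh k) (\<lambda>v. \<psi> v (x k)) (1 / \<nu> k) w'}
         in A \<noteq> {} \<and> norm (scp k) \<ge> \<kappa>s * Inf (norm ` A)))"
    \<comment> \<open>(A6)\<close>
    and A6: "\<And>k. \<bar>f (x k) - fhx k\<bar> \<le> \<kappa>f * (norm (s k))^2"
            "\<And>k. \<bar>f (x k + s k) - fhxs k\<bar> \<le> \<kappa>f * (norm (s k))^2"
            "\<And>k. norm (gradf (x k) - gh k) \<le> \<kappa>g * norm (s k)"
    \<comment> \<open>(A7)\<close>
    and A7: "\<exists>c. \<forall>y. ereal (f y) + h y \<ge> ereal c"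
    \<comment> \<open>hypotheses of the theorem\<close>
    and N_inf: "infinite N"
    and sc_argmin: "\<And>k. k \<in> N \<Longrightarrow> \<forall>w. m_cp (fhx k) (gh k) (\<lambda>v. \<psi> v (x k)) (1 / \<nu> k) (sc k)
                           \<le> m_cp (fhx k) (gh k) (\<lambda>v. \<psi> v (x k)) (1 / \<nu> k) w"
    and u_mem: "\<And>k. k \<in> N \<Longrightarrow> u k \<in> (\<lambda>v. gradf (x k) + v) ` limiting_subdiff (\<lambda>w. \<psi> w (x k)) (sc k)"
    and sc_lim: "conv_along N sc 0"
    and u_lim: "conv_along N u 0"
    and x_lim: "conv_along N x xbar"
    and limsup_incl: "set_limsup N (\<lambda>k. limiting_subdiff (\<lambda>w. \<psi> w (x k)) (sc k))
                        \<subseteq> limiting_subdiff (\<lambda>w. \<psi> w xbar) 0"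
  shows "0 \<in> (\<lambda>v. gradf xbar + v) ` limiting_subdiff h xbar"
proof -
  have "isCont gradf xbar"
    using gradf_cont by (simp add: continuous_on_eq_continuous_at)
  then have "- gradf xbar \<in> set_limsup N (\<lambda>k. limiting_subdiff (\<lambda>w. \<psi> w (x k)) (sc k))"
    using uminus_limit_mem_set_limsup[OF N_inf _ x_lim u_lim u_mem] by blast
  then have "- gradf xbar \<in> limiting_subdiff h xbar"
    using limsup_incl psi_subdiff by blast
  then show ?thesis
    by (intro image_eqI[of _ _ "- gradf xbar"]) simp_all
qed

end
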